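(* Let $G$ be a graph with no isolated vertices such that $\mathcal{Z}^{\mathrm{TE}}_+(G)\cong K_n$. Then either $G\cong K_n$, or $G$ is a tree on $n$ vertices.
   Context: PSD forcing: vertices are colored blue or white; if $B$ is the current set of blue vertices, $C$ a connected component of $G-B$, and $u$ a blue vertex with $N_G(u)\cap V(C)=\{v\}$, then $u$ may force $v$ to become blue. A PSD forcing set is a set of initially blue vertices from which repeated application of this rule turns every vertex blue; $\mathrm{Z}_+(G)$ is the minimum size of a PSD forcing set. $\mathcal{Z}^{\mathrm{TE}}_+(G)$ has as vertices the minimum PSD forcing sets of $G$, with $S_1S_2$ an edge iff $S_1\setminus S_2=\{v_1\}$ and $S_2\setminus S_1=\{v_2\}$ for some vertices $v_1,v_2$. *)

theory Defs
  imports Main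
begin

definition simple_graph :: "'a set \<Rightarrow> ('a \<Rightarrow> 'a \<Rightarrow> bool) \<Rightarrow> bool" where
  "simple_graph V E \<longleftrightarrow> finite V \<and> (\<forall>x y. E x y \<longrightarrow> x \<in> V \<and> y \<in> V)
     \<and> (\<forall>x y. E x y \<longrightarrow> E y x) \<and> (\<forall>x. \<not> E x x)"

definition conn_in :: "'a set \<Rightarrow> ('a \<Rightarrow> 'a \<Rightarrow> bool) \<Rightarrow> 'a \<Rightarrow> 'a \<Rightarrow> bool" where
  "conn_in W E x y \<longleftrightarrow> x \<in> W \<and> (\<lambda>a b. a \<in> W \<and> b \<in> W \<and> E a b)\<^sup>*\<^sup>* x y"

definition component_of :: "'a set \<Rightarrow> ('a \<Rightarrow> 'a \<Rightarrow> bool) \<Rightarrow> 'a \<Rightarrow> 'a set" where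
  "component_of W E x = {y. conn_in W E x y}"

inductive psd_reach :: "'a set \<Rightarrow> ('a \<Rightarrow> 'a \<Rightarrow> bool) \<Rightarrow> 'a set \<Rightarrow> 'a set \<Rightarrow> bool"
  for V E S where
  start: "psd_reach V E S S"
| force: "\<lbrakk> psd_reach V E S B; u \<in> B; x \<in> V - B; C = component_of (V - B) E x;
            {w \<in> C. E u w} = {v} \<rbrakk> \<Longrightarrow> psd_reach V E S (insert v B)"

definition psd_forcing_set :: "'a set \<Rightarrow> ('a \<Rightarrow> 'a \<Rightarrow> bool) \<Rightarrow> 'a set \<Rightarrow> bool" where
  "psd_forcing_set V E S \<longleftrightarrow> S \<subseteq> V \<and> psd_reach V E S V"

definition Zplus :: "'a set \<Rightarrow> ('a \<Rightarrow> 'a \<Rightarrow> bool) \<Rightarrow> nat" where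
  "Zplus V E = (LEAST k. \<exists>S. psd_forcing_set V E S \<and> card S = k)"

definition min_psd_sets :: "'a set \<Rightarrow> ('a \<Rightarrow> 'a \<Rightarrow> bool) \<Rightarrow> 'a set set" where
  "min_psd_sets V E = {S. psd_forcing_set V E S \<and> card S = Zplus V E}"

definition te_adj :: "'a set \<Rightarrow> 'a set \<Rightarrow> bool" where
  "te_adj S1 S2 \<longleftrightarrow> (\<exists>v1 v2. S1 - S2 = {v1} \<and> S2 - S1 = {v2})"

definition graph_iso :: "'a set \<Rightarrow> ('a \<Rightarrow> 'a \<Rightarrow> bool) \<Rightarrow> 'b set \<Rightarrow> ('b \<Rightarrow> 'b \<Rightarrow> bool) \<Rightarrow> bool" where
  "graph_iso V1 E1 V2 E2 \<longleftrightarrow> (\<exists>f. bij_betw f V1 V2 \<and>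
      (\<forall>x\<in>V1. \<forall>y\<in>V1. E1 x y \<longleftrightarrow> E2 (f x) (f y)))"

definition K_verts :: "nat \<Rightarrow> nat set" where "K_verts n = {0..<n}"
definition K_adj :: "nat \<Rightarrow> nat \<Rightarrow> bool" where "K_adj i j \<longleftrightarrow> i \<noteq> j"

definition connected_graph :: "'a set \<Rightarrow> ('a \<Rightarrow> 'a \<Rightarrow> bool) \<Rightarrow> bool" where
  "connected_graph V E \<longleftrightarrow> V \<noteq> {} \<and> (\<forall>x\<in>V. \<forall>y\<in>V. conn_in V E x y)"

definition is_cycle :: "'a set \<Rightarrow> ('a \<Rightarrow> 'a \<Rightarrow> bool) \<Rightarrow> 'a list \<Rightarrow> bool" where
  "is_cycle V E cs \<longleftrightarrow> length cs \<ge> 3 \<and> distinct cs \<and> set cs \<subseteq> V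
     \<and> (\<forall>i. Suc i < length cs \<longrightarrow> E (cs ! i) (cs ! Suc i)) \<and> E (last cs) (hd cs)"

definition is_tree :: "'a set \<Rightarrow> ('a \<Rightarrow> 'a \<Rightarrow> bool) \<Rightarrow> bool" where
  "is_tree V E \<longleftrightarrow> connected_graph V E \<and> \<not> (\<exists>cs. is_cycle V E cs)"

end

(* If u forces v from a minimum PSD forcing set S, then S - {u} + {v} is again one, since v
   can force u back.  Exchanging along the first force into the white component of a vertex
   shrinks that component, so every vertex lies in some minimum set and, when there are no
   isolated vertices, is missing from another.  If the token exchange graph is complete, all
   minimum sets are one exchange away from a fixed one S0, and two vertices inside S0 together
   with two outside it would produce two non-adjacent exchanges; hence |S0| = 1 or
   |V - S0| = 1.  In the first case every single vertex forces G, so G is connected and has no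
   cycle, and the minimum sets are the |V| singletons.  In the second case a non-edge xy would
   make V - {x, y} forcing, so G is complete and the minimum sets are the |V| complements of
   single vertices. *)

theory Submission
  imports Defs
begin

section \<open>Connectivity inside a vertex set\<close>

lemma simple_graph_sym: "simple_graph V E \<Longrightarrow> E x y \<Longrightarrow> E y x"
  unfolding simple_graph_def by blast

lemma simple_graph_edge_in: "simple_graph V E \<Longrightarrow> E x y \<Longrightarrow> x \<in> V \<and> y \<in> V"
  unfolding simple_graph_def by blast

lemma simple_graph_irrefl: "simple_graph V E \<Longrightarrow> \<not> E x x"
  unfolding simple_graph_def by blast

lemma simple_graph_finite: "simple_graph V E \<Longrightarrow> finite V"
  unfolding simple_graph_def by blast

lemma conn_in_refl: "x \<in> W \<Longrightarrow> conn_in W E x x"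
  unfolding conn_in_def by auto

lemma conn_in_induct[consumes 1, case_names base step]:
  assumes "conn_in W E x y" "P x"
    "\<And>a b. a \<in> W \<Longrightarrow> b \<in> W \<Longrightarrow> E a b \<Longrightarrow> P a \<Longrightarrow> P b"
  shows "P y"
proof -
  have "(\<lambda>a b. a \<in> W \<and> b \<in> W \<and> E a b)\<^sup>*\<^sup>* x y"
    using assms(1) unfolding conn_in_def by auto
  then show ?thesis
    by (induction rule: rtranclp_induct) (use assms in auto)
qed

lemma conn_in_mem: "conn_in W E x y \<Longrightarrow> x \<in> W \<and> y \<in> W"
  using conn_in_induct[of W E x y "\<lambda>z. z \<in> W"] unfolding conn_in_def by auto

lemma conn_in_trans: "conn_in W E x y \<Longrightarrow> conn_in W E y z \<Longrightarrow> conn_in W E x z"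
  unfolding conn_in_def by auto

lemma conn_in_step: "conn_in W E x y \<Longrightarrow> z \<in> W \<Longrightarrow> E y z \<Longrightarrow> conn_in W E x z"
  using conn_in_mem[of W E x y] unfolding conn_in_def
  by (auto intro: rtranclp.rtrancl_into_rtrancl)

lemma conn_in_sym:
  assumes "simple_graph V E" "conn_in W E x y"
  shows "conn_in W E y x"
  using assms(2)
proof (induction rule: conn_in_induct)
  case base
  show ?case using conn_in_mem[OF assms(2)] by (simp add: conn_in_refl)
next
  case (step a b)
  then have "conn_in W E b a" by (meson conn_in_refl conn_in_step simple_graph_sym[OF assms(1)])
  then show ?case using step.IH by (rule conn_in_trans)
qed

lemma mem_component_of: "y \<in> component_of W E x \<longleftrightarrow> conn_in W E x y"
  unfolding component_of_def by simp

lemma component_of_subset: "component_of W E x \<subseteq> W"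
  using conn_in_mem unfolding component_of_def by fastforce

lemma component_of_memD: "y \<in> component_of W E x \<Longrightarrow> y \<in> W"
  using component_of_subset by (rule subsetD)

lemma self_in_component_of: "x \<in> W \<Longrightarrow> x \<in> component_of W E x"
  by (simp add: mem_component_of conn_in_refl)

lemma component_of_closed:
  "y \<in> component_of W E x \<Longrightarrow> z \<in> W \<Longrightarrow> E y z \<Longrightarrow> z \<in> component_of W E x"
  by (simp add: mem_component_of conn_in_step)

lemma component_of_isolated:
  assumes "x \<in> W" "\<And>z. z \<in> W \<Longrightarrow> \<not> E x z"
  shows "component_of W E x = {x}"
proof (intro equalityI subsetI)
  fix y assume "y \<in> component_of W E x"
  then have "conn_in W E x y" by (simp add: mem_component_of)
  then show "y \<in> {x}" by (induction rule: conn_in_induct) (use assms(2) in auto)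
next
  fix y assume "y \<in> {x}"
  then show "y \<in> component_of W E x" using self_in_component_of[OF assms(1)] by simp
qed

lemma component_of_mono: "W \<subseteq> W' \<Longrightarrow> component_of W E x \<subseteq> component_of W' E x"
  unfolding component_of_def conn_in_def
  by (auto elim!: rtranclp_mono[THEN predicate2D, rotated])

lemma component_of_subset_of_mem:
  assumes "y \<in> component_of W E x"
  shows "component_of W E y \<subseteq> component_of W E x"
proof
  fix z assume "z \<in> component_of W E y"
  with assms show "z \<in> component_of W E x" unfolding mem_component_of by (rule conn_in_trans)
qed

lemma component_of_eq:
  assumes "simple_graph V E" "y \<in> component_of W E x"
  shows "component_of W E y = component_of W E x"
proof
  show "component_of W E y \<subseteq> component_of W E x"
    using assms(2) by (rule component_of_subset_of_mem)
  have "x \<in> component_of W E y"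
    using assms(2) unfolding mem_component_of by (rule conn_in_sym[OF assms(1)])
  then show "component_of W E x \<subseteq> component_of W E y" by (rule component_of_subset_of_mem)
qed

lemma component_of_restrict:
  assumes "component_of W E x \<subseteq> W'"
  shows "component_of W E x \<subseteq> component_of W' E x"
proof
  fix y assume "y \<in> component_of W E x"
  then have "conn_in W E x y" by (simp add: mem_component_of)
  then have "y \<in> component_of W E x \<and> y \<in> component_of W' E x"
  proof (induction rule: conn_in_induct)
    case base
    have "x \<in> component_of W E x"
      using conn_in_mem[OF \<open>conn_in W E x y\<close>] by (simp add: self_in_component_of)
    moreover from this have "x \<in> W'" by (rule subsetD[OF assms])
    ultimately show ?case by (simp add: self_in_component_of)
  next
    case (step a b)
    have "b \<in> component_of W E x" using component_of_closed[of a W E x b] step by blast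
    moreover from this have "b \<in> W'" by (rule subsetD[OF assms])
    ultimately show ?case using component_of_closed[of a W' E x b] step by blast
  qed
  then show "y \<in> component_of W' E x" ..
qed

section \<open>PSD forcing\<close>

lemma Collect_eq_singletonD: "{x \<in> A. P x} = {a} \<Longrightarrow> a \<in> A \<and> P a"
  by (metis (mono_tags) CollectD insertI1)

lemma psd_reach_subset: "psd_reach V E S B \<Longrightarrow> B \<subseteq> S \<union> V"
proof (induction rule: psd_reach.induct)
  case start
  then show ?case by simp
next
  case (force B u x C v)
  have "v \<in> C" using Collect_eq_singletonD[OF force.hyps(5)] by simp
  then have "v \<in> V" unfolding force.hyps(4) by (blast dest: component_of_memD)
  then show ?case using force.IH by blast
qed

lemma psd_forcing_set_subset: "psd_forcing_set V E S \<Longrightarrow> S \<subseteq> V"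
  unfolding psd_forcing_set_def by simp

lemma psd_reach_mono:
  assumes "psd_reach V E S B" "psd_reach V E R B'" "S \<subseteq> B'"
  shows "\<exists>B''. psd_reach V E R B'' \<and> B \<union> B' \<subseteq> B''"
  using assms(1)
proof (induction rule: psd_reach.induct)
  case start
  then show ?case using assms(2,3) by blast
next
  case (force B u x C v)
  from force.IH obtain B'' where B'': "psd_reach V E R B''" "B \<union> B' \<subseteq> B''" by blast
  show ?case
  proof (cases "v \<in> B''")
    case True
    then show ?thesis using B'' by (intro exI[of _ B'']) blast
  next
    case False
    have v: "v \<in> C" "E u v" using Collect_eq_singletonD[OF force.hyps(5)] by simp_all
    then have vV: "v \<in> V" unfolding force.hyps(4) by (blast dest: component_of_memD)
    have "component_of (V - B'') E v \<subseteq> component_of (V - B) E v"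
      using B''(2) by (intro component_of_mono) blast
    also have "\<dots> \<subseteq> C"
      using v(1) unfolding force.hyps(4) by (rule component_of_subset_of_mem)
    finally have "{w \<in> component_of (V - B'') E v. E u w} \<subseteq> {v}"
      using force.hyps(5) by blast
    moreover have "v \<in> component_of (V - B'') E v"
      using vV False by (simp add: self_in_component_of)
    ultimately have "{w \<in> component_of (V - B'') E v. E u w} = {v}" using v(2) by blast
    moreover have "u \<in> B''" "v \<in> V - B''" using force.hyps(2) B''(2) vV False by auto
    ultimately have "psd_reach V E R (insert v B'')"
      using psd_reach.force[OF B''(1) _ _ refl] by blast
    then show ?thesis using B''(2) by (intro exI[of _ "insert v B''"]) blast
  qed
qed

lemma psd_forcing_set_if_reach:
  assumes "psd_forcing_set V E S" "R \<subseteq> V" "psd_reach V E R B" "S \<subseteq> B"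
  shows "psd_forcing_set V E R"
proof -
  obtain B'' where B'': "psd_reach V E R B''" "V \<subseteq> B''"
    using psd_reach_mono[of V E S V R B] assms unfolding psd_forcing_set_def by blast
  have "B'' \<subseteq> V" using psd_reach_subset[OF B''(1)] assms(2) by blast
  then have "B'' = V" using B''(2) by (rule antisym)
  then show ?thesis using B''(1) assms(2) unfolding psd_forcing_set_def by simp
qed

lemma psd_forcing_set_drop_vertex:
  assumes G: "simple_graph V E" and F: "psd_forcing_set V E (insert x R)" and "x \<notin> R"
    and nbhd: "{z. E x z} \<subseteq> R" "{z. E x z} \<noteq> {}"
  shows "psd_forcing_set V E R"
proof -
  obtain y where y: "E x y" "y \<in> R" using nbhd by blast
  have V: "R \<subseteq> V" "x \<in> V - R" using psd_forcing_set_subset[OF F] \<open>x \<notin> R\<close> by auto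
  have "component_of (V - R) E x = {x}"
    using nbhd(1) V(2) by (intro component_of_isolated) auto
  then have "{w \<in> component_of (V - R) E x. E y w} = {x}"
    using simple_graph_sym[OF G y(1)] by auto
  from psd_reach.force[OF psd_reach.start y(2) V(2) refl this]
  have "psd_reach V E R (insert x R)" .
  then show ?thesis by (rule psd_forcing_set_if_reach[OF F V(1)]) simp
qed

(* At the first force into C the forcing vertex lies in S, since otherwise it would belong to
   C, and C is still contained in the component it forces into. *)
lemma psd_reach_first_force:
  assumes G: "simple_graph V E" and "psd_reach V E S B"
    and C: "C = component_of (V - S) E x" and "B \<inter> C \<noteq> {}"
  shows "\<exists>u\<in>S. \<exists>v. {w \<in> C. E u w} = {v}"
  using assms(2,4)
proof (induction rule: psd_reach.induct)
  case start
  then show ?case unfolding C by (blast dest: component_of_memD)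
next
  case (force B u y C' v)
  show ?case
  proof (cases "B \<inter> C = {}")
    case False
    then show ?thesis by (rule force.IH)
  next
    case True
    have vC: "v \<in> C" using force.prems True by blast
    have v: "v \<in> C'" "E u v" using Collect_eq_singletonD[OF force.hyps(5)] by simp_all
    have CB: "C \<subseteq> V - B" using True unfolding C by (blast dest: component_of_memD)
    have "u \<in> S"
    proof (rule ccontr)
      assume "u \<notin> S"
      then have "u \<in> V - S" using force.hyps(2) psd_reach_subset[OF force.hyps(1)] by blast
      then have "u \<in> C"
        using component_of_closed[of v "V - S" E x u] vC simple_graph_sym[OF G v(2)]
        unfolding C by blast
      then show False using CB force.hyps(2) by blast
    qed
    have "C = component_of (V - S) E v" using component_of_eq[OF G] vC C by simp
    also have "\<dots> \<subseteq> component_of (V - B) E v"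
      using CB \<open>C = component_of (V - S) E v\<close> by (intro component_of_restrict) simp
    also have "\<dots> = C'" using component_of_eq[OF G] v(1) force.hyps(4) by simp
    finally have "{w \<in> C. E u w} = {v}" using force.hyps(5) vC by blast
    then show ?thesis using \<open>u \<in> S\<close> by blast
  qed
qed

lemma psd_forcing_set_first_force:
  assumes "simple_graph V E" "psd_forcing_set V E S" "x \<in> V - S"
  shows "\<exists>u\<in>S. \<exists>v. {w \<in> component_of (V - S) E x. E u w} = {v}"
proof -
  have "psd_reach V E S V" using assms(2) unfolding psd_forcing_set_def by simp
  moreover have "V \<inter> component_of (V - S) E x \<noteq> {}"
    using self_in_component_of[OF assms(3)] assms(3) by blast
  ultimately show ?thesis by (rule psd_reach_first_force[OF assms(1) _ refl])
qed

(* After the exchange the only new white vertex is u, and its unique neighbour w in the old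
   component is now blue. *)
lemma component_of_exchange_psubset:
  assumes G: "simple_graph V E" and "u \<in> S"
    and w: "{z \<in> component_of (V - S) E x. E u z} = {w}"
    and y: "y \<in> component_of (V - S) E x"
  shows "component_of (V - insert w (S - {u})) E y \<subset> component_of (V - S) E x"
proof -
  have "z \<in> component_of (V - S) E x" if "conn_in (V - insert w (S - {u})) E y z" for z
    using that
  proof (induction rule: conn_in_induct)
    case base
    show ?case by (rule y)
  next
    case (step a b)
    show ?case
    proof (cases "b = u")
      case True
      then have "a \<in> {z \<in> component_of (V - S) E x. E u z}"
        using step simple_graph_sym[OF G] by blast
      then show ?thesis using w step.hyps(1) by blast
    next
      case False
      then show ?thesis using step component_of_closed[of a "V - S" E x b] by blast
    qed
  qed
  moreover have "w \<in> component_of (V - S) E x" using Collect_eq_singletonD[OF w] by simp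
  moreover have "w \<notin> component_of (V - insert w (S - {u})) E y"
    by (blast dest: component_of_memD)
  ultimately show ?thesis unfolding mem_component_of[symmetric] by blast
qed

lemma psd_forcing_set_exchange:
  assumes G: "simple_graph V E" and F: "psd_forcing_set V E S" and "u \<in> S"
    and w: "{z \<in> component_of (V - S) E x. E u z} = {w}"
  shows "psd_forcing_set V E (insert w (S - {u}))"
proof -
  let ?C = "component_of (V - S) E x" and ?S' = "insert w (S - {u})"
  have wC: "w \<in> ?C" "E u w" using Collect_eq_singletonD[OF w] by simp_all
  have "w \<in> V - S" using wC(1) by (rule component_of_memD)
  then have S'V: "?S' \<subseteq> V" and uW: "u \<in> V - ?S'"
    using \<open>u \<in> S\<close> psd_forcing_set_subset[OF F] by auto
  have "z = u" if z: "z \<in> component_of (V - ?S') E u" "E w z" for z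
  proof (rule ccontr)
    assume "z \<noteq> u"
    then have "z \<in> V - S" using component_of_memD[OF z(1)] by blast
    then have "z \<in> ?C" using component_of_closed[OF wC(1) _ z(2)] by blast
    moreover have "u \<in> component_of (V - ?S') E z"
      using component_of_eq[OF G z(1)] self_in_component_of[OF uW] by simp
    ultimately have "u \<in> ?C" using component_of_exchange_psubset[OF G \<open>u \<in> S\<close> w] by blast
    then have "u \<in> V - S" by (rule component_of_memD)
    then show False using \<open>u \<in> S\<close> by blast
  qed
  then have "{z \<in> component_of (V - ?S') E u. E w z} = {u}"
    using self_in_component_of[OF uW] simple_graph_sym[OF G wC(2)] by blast
  from psd_reach.force[OF psd_reach.start _ uW refl this]
  have "psd_reach V E ?S' (insert u ?S')" by simp
  then show ?thesis by (rule psd_forcing_set_if_reach[OF F S'V]) blast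
qed

section \<open>Minimum PSD forcing sets\<close>

lemma Zplus_le_card: "psd_forcing_set V E S \<Longrightarrow> Zplus V E \<le> card S"
  unfolding Zplus_def by (rule Least_le) blast

lemma min_psd_sets_nonempty: "min_psd_sets V E \<noteq> {}"
proof -
  have "psd_forcing_set V E V" unfolding psd_forcing_set_def by (simp add: psd_reach.start)
  then have "\<exists>k S. psd_forcing_set V E S \<and> card S = k" by blast
  then have "\<exists>S. psd_forcing_set V E S \<and> card S = Zplus V E"
    unfolding Zplus_def by (rule LeastI_ex)
  then show ?thesis unfolding min_psd_sets_def by blast
qed

lemma min_psd_sets_exchange:
  assumes G: "simple_graph V E" and S: "S \<in> min_psd_sets V E" and "u \<in> S"
    and w: "{z \<in> component_of (V - S) E x. E u z} = {w}"
  shows "insert w (S - {u}) \<in> min_psd_sets V E"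
proof -
  have F: "psd_forcing_set V E S" "card S = Zplus V E" using S unfolding min_psd_sets_def by auto
  have "finite S"
    using psd_forcing_set_subset[OF F(1)] simple_graph_finite[OF G] by (rule finite_subset)
  moreover have "w \<notin> S" using Collect_eq_singletonD[OF w] by (blast dest: component_of_memD)
  moreover have "card S > 0" using \<open>finite S\<close> \<open>u \<in> S\<close> card_gt_0_iff by blast
  ultimately have "card (insert w (S - {u})) = card S"
    using \<open>u \<in> S\<close> by (simp add: card_Diff_singleton)
  then show ?thesis
    using psd_forcing_set_exchange[OF G F(1) \<open>u \<in> S\<close> w] F(2) unfolding min_psd_sets_def by simp
qed

lemma card_component_of_exchange_less:
  assumes G: "simple_graph V E" and "u \<in> S"
    and w: "{z \<in> component_of (V - S) E x. E u z} = {w}"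
    and y: "y \<in> component_of (V - S) E x"
  shows "card (component_of (V - insert w (S - {u})) E y) < card (component_of (V - S) E x)"
proof (rule psubset_card_mono)
  show "finite (component_of (V - S) E x)"
    using simple_graph_finite[OF G] component_of_subset[of "V - S" E x] by (simp add: finite_subset)
  show "component_of (V - insert w (S - {u})) E y \<subset> component_of (V - S) E x"
    by (rule component_of_exchange_psubset[OF G \<open>u \<in> S\<close> w y])
qed

lemma min_psd_sets_cover:
  assumes G: "simple_graph V E" and "y \<in> V"
  shows "\<exists>S\<in>min_psd_sets V E. y \<in> S"
proof -
  have "\<exists>S'\<in>min_psd_sets V E. y \<in> S'" if "S \<in> min_psd_sets V E" for S
    using that
  proof (induction "card (component_of (V - S) E y)" arbitrary: S rule: less_induct)
    case less
    show ?case
    proof (cases "y \<in> S")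
      case True
      then show ?thesis using less.prems by blast
    next
      case False
      then have yW: "y \<in> V - S" using \<open>y \<in> V\<close> by blast
      have "psd_forcing_set V E S" using less.prems unfolding min_psd_sets_def by blast
      then obtain u w where u: "u \<in> S" and w: "{z \<in> component_of (V - S) E y. E u z} = {w}"
        using psd_forcing_set_first_force[OF G _ yW] by blast
      have S': "insert w (S - {u}) \<in> min_psd_sets V E"
        by (rule min_psd_sets_exchange[OF G less.prems u w])
      have "card (component_of (V - insert w (S - {u})) E y) < card (component_of (V - S) E y)"
        by (rule card_component_of_exchange_less[OF G u w self_in_component_of[OF yW]])
      then show ?thesis using less.hyps S' by blast
    qed
  qed
  then show ?thesis using min_psd_sets_nonempty by blast
qed

lemma min_psd_set_neighbour_outside:
  assumes G: "simple_graph V E" and no_isolated: "\<forall>v\<in>V. \<exists>w\<in>V. E v w"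
    and S: "S \<in> min_psd_sets V E" and "a \<in> S"
  shows "\<exists>y. E a y \<and> y \<notin> S"
proof (rule ccontr)
  assume "\<not> ?thesis"
  then have nbhd: "{z. E a z} \<subseteq> S - {a}" using simple_graph_irrefl[OF G] by blast
  have F: "psd_forcing_set V E S" "card S = Zplus V E" using S unfolding min_psd_sets_def by auto
  have "a \<in> V" using psd_forcing_set_subset[OF F(1)] \<open>a \<in> S\<close> by blast
  then have "{z. E a z} \<noteq> {}" using no_isolated by blast
  moreover have "psd_forcing_set V E (insert a (S - {a}))" using F(1) \<open>a \<in> S\<close> by (simp add: insert_absorb)
  ultimately have "psd_forcing_set V E (S - {a})"
    using psd_forcing_set_drop_vertex[OF G _ _ nbhd] by blast
  then have "Zplus V E \<le> card S - 1"
    using Zplus_le_card[of V E "S - {a}"] \<open>a \<in> S\<close> by (simp add: card_Diff_singleton)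
  moreover have "finite S"
    using psd_forcing_set_subset[OF F(1)] simple_graph_finite[OF G] by (rule finite_subset)
  then have "card S > 0" using \<open>a \<in> S\<close> card_gt_0_iff by blast
  ultimately show False using F(2) by linarith
qed

lemma min_psd_sets_avoid:
  assumes G: "simple_graph V E" and no_isolated: "\<forall>v\<in>V. \<exists>w\<in>V. E v w"
  shows "\<exists>S\<in>min_psd_sets V E. a \<notin> S"
proof -
  have "\<exists>S'\<in>min_psd_sets V E. a \<notin> S'"
    if "S \<in> min_psd_sets V E" "a \<in> S" "E a y" "y \<notin> S" for S y
    using that
  proof (induction "card (component_of (V - S) E y)" arbitrary: S y rule: less_induct)
    case less
    let ?C = "component_of (V - S) E y"
    have yW: "y \<in> V - S" using simple_graph_edge_in[OF G less.prems(3)] less.prems(4) by blast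
    have "y \<in> ?C" by (rule self_in_component_of[OF yW])
    have "psd_forcing_set V E S" using less.prems(1) unfolding min_psd_sets_def by blast
    then obtain u w where u: "u \<in> S" and w: "{z \<in> ?C. E u z} = {w}"
      using psd_forcing_set_first_force[OF G _ yW] by blast
    show ?case
    txt \<open>Unless a itself forces into the component, exchanging along the first force
      (u forces w) keeps a blue and shrinks the white component of some neighbour of a.\<close>
    proof (cases "\<exists>y'\<in>?C. E a y' \<and> y' \<noteq> w")
      case True
      then obtain y' where y': "y' \<in> ?C" "E a y'" "y' \<noteq> w" by blast
      have "u \<noteq> a"
      proof
        assume "u = a"
        then have "y' \<in> {z \<in> ?C. E u z}" using y' by simp
        then show False unfolding w using y'(3) by simp
      qed
      let ?S' = "insert w (S - {u})"
      have S': "?S' \<in> min_psd_sets V E" by (rule min_psd_sets_exchange[OF G less.prems(1) u w])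
      have "a \<in> ?S'" using \<open>u \<noteq> a\<close> less.prems(2) by blast
      moreover have "y' \<in> V - S" using y'(1) by (rule component_of_memD)
      then have "y' \<notin> ?S'" using y'(3) by blast
      moreover have "card (component_of (V - ?S') E y') < card ?C"
        by (rule card_component_of_exchange_less[OF G u w y'(1)])
      ultimately show ?thesis using less.hyps S' y'(2) by blast
    next
      case False
      then have "{z \<in> ?C. E a z} = {y}" using \<open>y \<in> ?C\<close> less.prems(3) by auto
      from min_psd_sets_exchange[OF G less.prems(1,2) this]
      have "insert y (S - {a}) \<in> min_psd_sets V E" .
      moreover have "a \<notin> insert y (S - {a})" using yW less.prems(2) by auto
      ultimately show ?thesis by (rule bexI[rotated])
    qed
  qed
  note avoid_from = this
  obtain S where S: "S \<in> min_psd_sets V E" using min_psd_sets_nonempty by blast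
  show ?thesis
  proof (cases "a \<in> S")
    case True
    then obtain y where "E a y" "y \<notin> S"
      using min_psd_set_neighbour_outside[OF G no_isolated S] by blast
    then show ?thesis by (rule avoid_from[OF S True])
  next
    case False
    with S show ?thesis by (rule bexI[rotated])
  qed
qed

section \<open>Cliques of the token exchange graph\<close>

lemma te_adj_exchange:
  assumes "te_adj S T"
  obtains p q where "p \<in> S" "q \<in> T - S" "T = insert q (S - {p})"
proof -
  obtain p q where "S - T = {p}" "T - S = {q}" using assms unfolding te_adj_def by blast
  then have "p \<in> S" "q \<in> T - S" "T = insert q (S - {p})" by blast+
  then show ?thesis by (rule that)
qed

lemma te_clique_exchange_unique:
  assumes clique: "pairwise te_adj F"
    and F: "insert q (S - {p}) \<in> F" "insert q' (S - {p'}) \<in> F"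
    and "p \<in> S" "p' \<in> S" "q \<notin> S" "q' \<notin> S"
  shows "p = p' \<or> q = q'"
proof (rule ccontr)
  assume "\<not> ?thesis"
  then have diff: "q \<in> insert q (S - {p}) - insert q' (S - {p'})"
    "p' \<in> insert q (S - {p}) - insert q' (S - {p'})"
    using assms(4-7) by auto
  then have "insert q (S - {p}) \<noteq> insert q' (S - {p'})" by (metis Diff_cancel empty_iff)
  then have "te_adj (insert q (S - {p})) (insert q' (S - {p'}))"
    by (rule pairwiseD[OF clique F])
  then obtain v where v: "insert q (S - {p}) - insert q' (S - {p'}) = {v}"
    unfolding te_adj_def by blast
  have "q = p'" using diff unfolding v by simp
  then show False using assms(5,6) by simp
qed

lemma te_clique_no_two_drops_two_adds:
  assumes clique: "pairwise te_adj F"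
    and a: "a1 \<in> S" "a2 \<in> S" "a1 \<noteq> a2" and q: "q1 \<notin> S" "q2 \<notin> S"
    and drops: "insert q1 (S - {a1}) \<in> F" "insert q2 (S - {a2}) \<in> F"
    and p: "p1 \<in> S" "p2 \<in> S" and b: "b1 \<notin> S" "b2 \<notin> S" "b1 \<noteq> b2"
    and adds: "insert b1 (S - {p1}) \<in> F" "insert b2 (S - {p2}) \<in> F"
  shows False
proof -
  note unique = te_clique_exchange_unique[OF clique]
  have "q1 = q2" using unique[OF drops a(1,2) q] a(3) by blast
  moreover have "p1 = p2" using unique[OF adds p b(1,2)] b(3) by blast
  moreover have "a1 = p1 \<or> q1 = b1" by (rule unique[OF drops(1) adds(1) a(1) p(1) q(1) b(1)])
  moreover have "a1 = p2 \<or> q1 = b2" by (rule unique[OF drops(1) adds(2) a(1) p(2) q(1) b(2)])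
  moreover have "a2 = p1 \<or> q2 = b1" by (rule unique[OF drops(2) adds(1) a(2) p(1) q(2) b(1)])
  moreover have "a2 = p2 \<or> q2 = b2" by (rule unique[OF drops(2) adds(2) a(2) p(2) q(2) b(2)])
  ultimately show False using a(3) b(3) by metis
qed

lemma te_clique_exchange:
  assumes "pairwise te_adj F" "F \<subseteq> Pow V" "S0 \<in> F" "T \<in> F" "T \<noteq> S0"
  obtains p q where "p \<in> S0" "q \<in> V - S0" "T = insert q (S0 - {p})"
proof -
  have "te_adj S0 T" using pairwiseD[OF assms(1,3,4)] assms(5) by simp
  then obtain p q where "p \<in> S0" "q \<in> T - S0" "T = insert q (S0 - {p})"
    by (rule te_adj_exchange)
  moreover have "T \<subseteq> V" using assms(2,4) by blast
  ultimately show ?thesis using that by blast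
qed

lemma te_clique_dichotomy:
  assumes clique: "pairwise te_adj F" and F: "F \<subseteq> Pow V" "S0 \<in> F" and "V \<noteq> {}"
    and avoid: "\<forall>a\<in>S0. \<exists>T\<in>F. a \<notin> T" and cover: "\<forall>b\<in>V. \<exists>T\<in>F. b \<in> T"
  shows "is_singleton S0 \<or> is_singleton (V - S0)"
proof -
  note exchange = te_clique_exchange[OF clique F]
  have drop: "\<exists>q. q \<notin> S0 \<and> insert q (S0 - {a}) \<in> F" if a: "a \<in> S0" for a
  proof -
    obtain T where T: "T \<in> F" "a \<notin> T" using avoid a by blast
    with a have "T \<noteq> S0" by blast
    with T(1) obtain p q where pq: "p \<in> S0" "q \<in> V - S0" "T = insert q (S0 - {p})"
      by (rule exchange)
    with T(2) a have "p = a" by blast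
    with T(1) pq show ?thesis by blast
  qed
  have add: "\<exists>p. p \<in> S0 \<and> insert b (S0 - {p}) \<in> F" if b: "b \<in> V - S0" for b
  proof -
    obtain T where T: "T \<in> F" "b \<in> T" using cover b by blast
    with b have "T \<noteq> S0" by blast
    with T(1) obtain p q where pq: "p \<in> S0" "q \<in> V - S0" "T = insert q (S0 - {p})"
      by (rule exchange)
    with T(2) b have "q = b" by blast
    with T(1) pq show ?thesis by blast
  qed
  obtain v where v: "v \<in> V" using \<open>V \<noteq> {}\<close> by blast
  have "\<exists>T\<in>F. T \<noteq> S0"
  proof (cases "v \<in> S0")
    case True
    then obtain T where "T \<in> F" "v \<notin> T" using avoid by blast
    then show ?thesis using True by auto
  next
    case False
    then obtain T where "T \<in> F" "v \<in> T" using cover v by blast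
    then show ?thesis using False by auto
  qed
  then obtain T where "T \<in> F" "T \<noteq> S0" by blast
  then obtain p q where "p \<in> S0" "q \<in> V - S0" by (rule exchange)
  then have "S0 \<noteq> {}" "V - S0 \<noteq> {}" by auto
  show ?thesis
  proof (rule ccontr)
    assume "\<not> ?thesis"
    then obtain a1 a2 b1 b2 where a: "a1 \<in> S0" "a2 \<in> S0" "a1 \<noteq> a2"
      and b: "b1 \<in> V - S0" "b2 \<in> V - S0" "b1 \<noteq> b2"
      using \<open>S0 \<noteq> {}\<close> \<open>V - S0 \<noteq> {}\<close> is_singletonI' by metis
    obtain q1 q2 where "q1 \<notin> S0" "insert q1 (S0 - {a1}) \<in> F"
      "q2 \<notin> S0" "insert q2 (S0 - {a2}) \<in> F"
      using drop a(1,2) by meson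
    moreover obtain p1 p2 where "p1 \<in> S0" "insert b1 (S0 - {p1}) \<in> F"
      "p2 \<in> S0" "insert b2 (S0 - {p2}) \<in> F"
      using add b(1,2) by meson
    ultimately show False
      using te_clique_no_two_drops_two_adds[OF clique a] b by blast
  qed
qed

section \<open>The two extremal cases\<close>

lemma psd_reach_conn_in:
  assumes "psd_reach V E S B" "S \<subseteq> V" "y \<in> B"
  shows "\<exists>s\<in>S. conn_in V E s y"
  using assms(1,3)
proof (induction arbitrary: y rule: psd_reach.induct)
  case start
  then have "conn_in V E y y" using assms(2) by (blast intro: conn_in_refl)
  then show ?case using start by blast
next
  case (force B u x C v)
  have v: "v \<in> C" "E u v" using Collect_eq_singletonD[OF force.hyps(5)] by simp_all
  then have "v \<in> V" unfolding force.hyps(4) by (blast dest: component_of_memD)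
  show ?case
  proof (cases "y = v")
    case True
    obtain s where s: "s \<in> S" "conn_in V E s u" using force.IH[OF force.hyps(2)] by blast
    from s(2) \<open>v \<in> V\<close> v(2) have "conn_in V E s v" by (rule conn_in_step)
    then show ?thesis using s(1) True by blast
  next
    case False
    then show ?thesis using force.IH force.prems by blast
  qed
qed

lemma is_cycle_conn_in_Diff_hd:
  assumes c: "is_cycle V E cs" and "1 \<le> i" "i < length cs"
  shows "conn_in (V - {hd cs}) E (cs ! 1) (cs ! i)"
  using assms(2,3)
proof (induction i)
  case 0
  then show ?case by simp
next
  case (Suc j)
  have cs: "distinct cs" "set cs \<subseteq> V" "cs \<noteq> []" using c Suc.prems unfolding is_cycle_def by auto
  have "cs ! Suc j \<in> V" using cs(2) nth_mem[OF Suc.prems(2)] by blast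
  moreover have "cs ! Suc j \<noteq> cs ! 0"
    using nth_eq_iff_index_eq[OF cs(1) Suc.prems(2), of 0] cs(3) by simp
  ultimately have mem: "cs ! Suc j \<in> V - {hd cs}" using hd_conv_nth[OF cs(3)] by simp
  show ?case
  proof (cases "j = 0")
    case True
    then show ?thesis using conn_in_refl[OF mem] by simp
  next
    case False
    then have "conn_in (V - {hd cs}) E (cs ! 1) (cs ! j)" using Suc by simp
    moreover have "E (cs ! j) (cs ! Suc j)" using c Suc.prems(2) unfolding is_cycle_def by blast
    ultimately show ?thesis by (rule conn_in_step[OF _ mem])
  qed
qed

(* Both cycle neighbours of hd cs lie in one white component, so hd cs can never force. *)
lemma not_psd_forcing_set_hd_cycle:
  assumes G: "simple_graph V E" and c: "is_cycle V E cs"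
  shows "\<not> psd_forcing_set V E {hd cs}"
proof
  assume F: "psd_forcing_set V E {hd cs}"
  have cs: "length cs \<ge> 3" "distinct cs" "set cs \<subseteq> V" using c unfolding is_cycle_def by auto
  then have "cs \<noteq> []" by auto
  then have hd: "hd cs = cs ! 0" and last: "last cs = cs ! (length cs - 1)"
    by (simp_all add: hd_conv_nth last_conv_nth)
  have neq: "cs ! 1 \<noteq> cs ! 0" "cs ! 1 \<noteq> cs ! (length cs - 1)"
    using nth_eq_iff_index_eq[OF cs(2), of 1 0] nth_eq_iff_index_eq[OF cs(2), of 1 "length cs - 1"]
      cs(1) \<open>cs \<noteq> []\<close> by simp_all
  let ?C = "component_of (V - {hd cs}) E (cs ! 1)"
  have "cs ! 1 \<in> V" using cs(1,3) nth_mem[of 1 cs] by auto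
  then have W: "cs ! 1 \<in> V - {hd cs}" using neq(1) hd by simp
  have "conn_in (V - {hd cs}) E (cs ! 1) (last cs)"
    using is_cycle_conn_in_Diff_hd[OF c, of "length cs - 1"] cs(1) last by simp
  moreover have "E (hd cs) (cs ! 1)" "E (hd cs) (last cs)"
    using c cs(1) hd simple_graph_sym[OF G] unfolding is_cycle_def by auto
  ultimately have two: "cs ! 1 \<in> {w \<in> ?C. E (hd cs) w}" "last cs \<in> {w \<in> ?C. E (hd cs) w}"
    using self_in_component_of[OF W] by (simp_all add: mem_component_of)
  obtain v where v: "{w \<in> ?C. E (hd cs) w} = {v}"
    using psd_forcing_set_first_force[OF G F W] by blast
  have "cs ! 1 = v" "last cs = v" using two unfolding v by simp_all
  then show False using neq(2) last by simp
qed

lemma is_tree_if_singletons_forcing: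
  assumes G: "simple_graph V E" and "V \<noteq> {}" and forcing: "\<forall>x\<in>V. psd_forcing_set V E {x}"
  shows "is_tree V E"
proof -
  have "conn_in V E x y" if "x \<in> V" "y \<in> V" for x y
  proof -
    have "psd_reach V E {x} V" using forcing that(1) unfolding psd_forcing_set_def by blast
    from psd_reach_conn_in[OF this _ that(2)] that(1) show ?thesis by blast
  qed
  then have "connected_graph V E" using \<open>V \<noteq> {}\<close> unfolding connected_graph_def by blast
  moreover have "\<not> is_cycle V E cs" for cs
  proof
    assume c: "is_cycle V E cs"
    then have "cs \<noteq> []" "set cs \<subseteq> V" unfolding is_cycle_def by auto
    then have "hd cs \<in> V" using hd_in_set[of cs] by blast
    then show False using not_psd_forcing_set_hd_cycle[OF G c] forcing by blast
  qed
  ultimately show ?thesis unfolding is_tree_def by blast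
qed

lemma min_psd_sets_eq_singletons:
  assumes G: "simple_graph V E" and Z: "Zplus V E = 1"
  shows "min_psd_sets V E = (\<lambda>x. {x}) ` V"
proof (intro equalityI subsetI)
  fix S assume "S \<in> min_psd_sets V E"
  then have "card S = 1" "S \<subseteq> V" using Z psd_forcing_set_subset unfolding min_psd_sets_def by auto
  then show "S \<in> (\<lambda>x. {x}) ` V" by (auto simp: card_1_singleton_iff)
next
  fix S assume "S \<in> (\<lambda>x. {x}) ` V"
  then obtain x where x: "x \<in> V" "S = {x}" by blast
  obtain T where T: "T \<in> min_psd_sets V E" "x \<in> T" using min_psd_sets_cover[OF G x(1)] by blast
  then have "card T = 1" using Z unfolding min_psd_sets_def by simp
  then have "T = {x}" using T(2) by (auto simp: card_1_singleton_iff)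
  then show "S \<in> min_psd_sets V E" using T(1) x(2) by simp
qed

lemma psd_forcing_set_Diff_singleton:
  assumes G: "simple_graph V E" and no_isolated: "\<forall>v\<in>V. \<exists>w\<in>V. E v w" and "x \<in> V"
  shows "psd_forcing_set V E (V - {x})"
proof (rule psd_forcing_set_drop_vertex[OF G])
  show "psd_forcing_set V E (insert x (V - {x}))"
    using \<open>x \<in> V\<close> unfolding psd_forcing_set_def by (simp add: insert_absorb psd_reach.start)
  show "{z. E x z} \<subseteq> V - {x}"
    using simple_graph_edge_in[OF G] simple_graph_irrefl[OF G] by blast
  show "{z. E x z} \<noteq> {}" using no_isolated \<open>x \<in> V\<close> by blast
qed simp

lemma Zplus_plus_1_eq_card_imp_adjacent:
  assumes G: "simple_graph V E" and no_isolated: "\<forall>v\<in>V. \<exists>w\<in>V. E v w"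
    and Z: "Zplus V E + 1 = card V" and xy: "x \<in> V" "y \<in> V" "x \<noteq> y"
  shows "E x y"
proof (rule ccontr)
  assume "\<not> E x y"
  have "psd_forcing_set V E (V - {x, y})"
  proof (rule psd_forcing_set_drop_vertex[OF G])
    have "insert x (V - {x, y}) = V - {y}" using xy by auto
    then show "psd_forcing_set V E (insert x (V - {x, y}))"
      using psd_forcing_set_Diff_singleton[OF G no_isolated xy(2)] by simp
    show "{z. E x z} \<subseteq> V - {x, y}"
      using \<open>\<not> E x y\<close> simple_graph_edge_in[OF G] simple_graph_irrefl[OF G] by blast
    show "{z. E x z} \<noteq> {}" using no_isolated xy(1) by blast
  qed simp
  then have "Zplus V E \<le> card (V - {x, y})" by (rule Zplus_le_card)
  moreover have "{x, y} \<subseteq> V" "finite V" using xy simple_graph_finite[OF G] by auto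
  then have "card (V - {x, y}) = card V - 2" "card {x, y} \<le> card V"
    using xy(3) card_mono[of V "{x, y}"] by (simp_all add: card_Diff_subset)
  ultimately show False using Z xy(3) by simp
qed

lemma min_psd_sets_eq_complements:
  assumes G: "simple_graph V E" and no_isolated: "\<forall>v\<in>V. \<exists>w\<in>V. E v w"
    and Z: "Zplus V E + 1 = card V"
  shows "min_psd_sets V E = (\<lambda>x. V - {x}) ` V"
proof (intro equalityI subsetI)
  fix S assume "S \<in> min_psd_sets V E"
  then have S: "S \<subseteq> V" "card S + 1 = card V"
    using Z psd_forcing_set_subset unfolding min_psd_sets_def by auto
  then have "S \<noteq> V" by auto
  then obtain x where x: "x \<in> V" "x \<notin> S" using S(1) by blast
  then have "S \<subseteq> V - {x}" using S(1) by blast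
  moreover have "card (V - {x}) = card S" using S(2) x(1) by (simp add: card_Diff_singleton)
  ultimately have "S = V - {x}"
    using simple_graph_finite[OF G] by (metis card_subset_eq finite_Diff)
  then show "S \<in> (\<lambda>x. V - {x}) ` V" using x(1) by blast
next
  fix S assume "S \<in> (\<lambda>x. V - {x}) ` V"
  then obtain x where x: "x \<in> V" "S = V - {x}" by blast
  moreover have "card (V - {x}) = Zplus V E" using Z x(1) by (simp add: card_Diff_singleton)
  ultimately show "S \<in> min_psd_sets V E"
    using psd_forcing_set_Diff_singleton[OF G no_isolated x(1)] unfolding min_psd_sets_def by simp
qed

lemma Zplus_plus_1_eq_card:
  assumes G: "simple_graph V E" and S: "S \<in> min_psd_sets V E" and "is_singleton (V - S)"
  shows "Zplus V E + 1 = card V"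
proof -
  have "card (V - S) = 1" using \<open>is_singleton (V - S)\<close> by (simp add: is_singleton_altdef)
  moreover have "S \<subseteq> V" "finite V"
    using S psd_forcing_set_subset simple_graph_finite[OF G] unfolding min_psd_sets_def by auto
  then have "card (V - S) = card V - card S" "card S \<le> card V"
    by (simp_all add: card_Diff_subset finite_subset card_mono)
  moreover have "card S = Zplus V E" using S unfolding min_psd_sets_def by simp
  ultimately show ?thesis by linarith
qed

lemma graph_iso_complete_graph_iff:
  "graph_iso V E (K_verts n) K_adj \<longleftrightarrow>
     finite V \<and> card V = n \<and> (\<forall>x\<in>V. \<forall>y\<in>V. E x y \<longleftrightarrow> x \<noteq> y)"
proof
  assume "graph_iso V E (K_verts n) K_adj"
  then obtain f where f: "bij_betw f V {0..<n}" "\<forall>x\<in>V. \<forall>y\<in>V. E x y \<longleftrightarrow> f x \<noteq> f y"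
    unfolding graph_iso_def K_verts_def K_adj_def by blast
  have "f x = f y \<longleftrightarrow> x = y" if "x \<in> V" "y \<in> V" for x y
    using f(1) that unfolding bij_betw_def inj_on_def by blast
  then show "finite V \<and> card V = n \<and> (\<forall>x\<in>V. \<forall>y\<in>V. E x y \<longleftrightarrow> x \<noteq> y)"
    using bij_betw_finite[OF f(1)] bij_betw_same_card[OF f(1)] f(2) by simp
next
  assume V: "finite V \<and> card V = n \<and> (\<forall>x\<in>V. \<forall>y\<in>V. E x y \<longleftrightarrow> x \<noteq> y)"
  then obtain f where f: "bij_betw f V {0..<n}" using finite_same_card_bij[of V "{0..<n}"] by auto
  have "f x = f y \<longleftrightarrow> x = y" if "x \<in> V" "y \<in> V" for x y
    using f that unfolding bij_betw_def inj_on_def by blast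
  then show "graph_iso V E (K_verts n) K_adj"
    unfolding graph_iso_def K_verts_def K_adj_def using f V by auto
qed

theorem theorem4p10:
  fixes V :: "'a set" and E :: "'a \<Rightarrow> 'a \<Rightarrow> bool" and n :: nat
  assumes "simple_graph V E"
    and "V \<noteq> {}"
    and "\<forall>v\<in>V. \<exists>w\<in>V. E v w"
    and "graph_iso (min_psd_sets V E) te_adj (K_verts n) K_adj"
  shows "graph_iso V E (K_verts n) K_adj \<or> (is_tree V E \<and> card V = n)"
proof -
  let ?F = "min_psd_sets V E"
  have card_F: "card ?F = n" and clique: "pairwise te_adj ?F"
    using assms(4) unfolding graph_iso_complete_graph_iff pairwise_def by auto
  obtain S0 where S0: "S0 \<in> ?F" using min_psd_sets_nonempty by blast
  have "?F \<subseteq> Pow V" unfolding min_psd_sets_def using psd_forcing_set_subset by blast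
  then have "is_singleton S0 \<or> is_singleton (V - S0)"
    using te_clique_dichotomy[OF clique _ S0 assms(2)] min_psd_sets_avoid[OF assms(1,3)]
      min_psd_sets_cover[OF assms(1)] by blast
  then show ?thesis
  proof
    assume "is_singleton S0"
    with S0 have "Zplus V E = 1" unfolding min_psd_sets_def is_singleton_altdef by simp
    then have F: "?F = (\<lambda>x. {x}) ` V" by (rule min_psd_sets_eq_singletons[OF assms(1)])
    then have "is_tree V E"
      using is_tree_if_singletons_forcing[OF assms(1,2)] unfolding min_psd_sets_def by blast
    moreover have "card V = n" using card_F unfolding F by (simp add: card_image)
    ultimately show ?thesis by blast
  next
    assume "is_singleton (V - S0)"
    with assms(1) S0 have Z: "Zplus V E + 1 = card V" by (rule Zplus_plus_1_eq_card)
    have "inj_on (\<lambda>x. V - {x}) V" unfolding inj_on_def by blast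
    then have "card V = n"
      using card_F unfolding min_psd_sets_eq_complements[OF assms(1,3) Z] by (simp add: card_image)
    then show ?thesis
      using Zplus_plus_1_eq_card_imp_adjacent[OF assms(1,3) Z] simple_graph_irrefl[OF assms(1)]
        simple_graph_finite[OF assms(1)]
      unfolding graph_iso_complete_graph_iff by blast
  qed
qed

end
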